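(* Let $k,\ell\ge 2$ be integers, $\alpha>0$, and let $\mathcal{C}$ be a non-empty $\alpha$-rich collection of $2\ell$-cycles in a graph $G$. If $\alpha\ge k\ell$, then $G$ contains a copy of $P_{k,\ell}$.
   Context: For $\alpha>0$ and $\ell\ge 2$, a collection $\mathcal{C}$ of labelled $2\ell$-cycles $x_1x_2\cdots x_{2\ell}x_1$ (with distinct vertices) in $G$ is $\alpha$-rich if for every member $x_1\cdots x_{2\ell}x_1\in\mathcal{C}$ and every $1\le i\le 2\ell$ there exist at least $\alpha$ distinct vertices $x_i'$ such that $x_1\cdots x_{i-1}x_i'x_{i+1}\cdots x_{2\ell}x_1\in\mathcal{C}$. The quadrangulated cylinder $P_{k,\ell}$ has vertex set $\{x_{i,j}:1\le i\le k,1\le j\le\ell\}$ and edges $x_{i,j}x_{i+1,j}$ ($1\le i\le k-1$, $1\le j\le\ell$), $x_{i,j+1}x_{i+1,j}$ ($1\le i\le k-1$ odd, $1\le j\le\ell$), $x_{i,j}x_{i+1,j+1}$ ($1\le i\le k-1$ even, $1\le j\le\ell$), with $x_{i,\ell+1}=x_{i,1}$. *)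

theory Defs
  imports Complex_Main
begin

definition simple_graph :: "'a set \<Rightarrow> ('a \<Rightarrow> 'a \<Rightarrow> bool) \<Rightarrow> bool" where
  "simple_graph V E \<longleftrightarrow> finite V \<and> (\<forall>x y. E x y \<longrightarrow> E y x) \<and> (\<forall>x. \<not> E x x)
     \<and> (\<forall>x y. E x y \<longrightarrow> x \<in> V \<and> y \<in> V)"

text \<open>A labelled 2l-cycle x_1 ... x_{2l} x_1, stored as a list of length 2l (0-indexed).\<close>
definition is_cycle :: "'a set \<Rightarrow> ('a \<Rightarrow> 'a \<Rightarrow> bool) \<Rightarrow> nat \<Rightarrow> 'a list \<Rightarrow> bool" where
  "is_cycle V E l xs \<longleftrightarrow> length xs = 2 * l \<and> distinct xs \<and> set xs \<subseteq> V
     \<and> (\<forall>i < 2 * l. E (xs ! i) (xs ! ((i + 1) mod (2 * l))))"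

definition rich :: "'a set \<Rightarrow> ('a \<Rightarrow> 'a \<Rightarrow> bool) \<Rightarrow> nat \<Rightarrow> real \<Rightarrow> 'a list set \<Rightarrow> bool" where
  "rich V E l \<alpha> C \<longleftrightarrow> (\<forall>xs \<in> C. is_cycle V E l xs) \<and>
     (\<forall>xs \<in> C. \<forall>i < 2 * l. \<exists>S. finite S \<and> real (card S) \<ge> \<alpha> \<and>
         (\<forall>v \<in> S. xs[i := v] \<in> C))"

definition cyc_succ :: "nat \<Rightarrow> nat \<Rightarrow> nat" where
  "cyc_succ l j = (if j = l then 1 else j + 1)"

text \<open>G contains a copy of the quadrangulated cylinder P_{k,l}: an injective
  map of its vertices x_{i,j} into V sending edges to edges.\<close>
definition has_cylinder :: "'a set \<Rightarrow> ('a \<Rightarrow> 'a \<Rightarrow> bool) \<Rightarrow> nat \<Rightarrow> nat \<Rightarrow> bool" where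
  "has_cylinder V E k l \<longleftrightarrow> (\<exists>f :: nat \<Rightarrow> nat \<Rightarrow> 'a.
     inj_on (\<lambda>(i, j). f i j) ({1..k} \<times> {1..l}) \<and>
     (\<forall>i \<in> {1..k}. \<forall>j \<in> {1..l}. f i j \<in> V) \<and>
     (\<forall>i \<in> {1..k-1}. \<forall>j \<in> {1..l}. E (f i j) (f (i + 1) j)) \<and>
     (\<forall>i \<in> {1..k-1}. odd i \<longrightarrow> (\<forall>j \<in> {1..l}. E (f i (cyc_succ l j)) (f (i + 1) j))) \<and>
     (\<forall>i \<in> {1..k-1}. even i \<longrightarrow> (\<forall>j \<in> {1..l}. E (f i j) (f (i + 1) (cyc_succ l j)))))"

end

theory Submission
  imports Defs
begin

text \<open>The cylinder is built row by row, each row \<open>r\<close> being one parity class of a cycle of \<open>\<C>\<close>;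
  the two parity classes of a single cycle always span the edges required between consecutive
  rows. To add row \<open>r + 1\<close>, keep the cycle carrying row \<open>r\<close> and use richness to re-choose its
  vertices of the other parity one at a time, each time among at least \<open>\<alpha>\<close> candidates, so that
  they avoid the at most \<open>r l < \<alpha>\<close> vertices already used. Hence \<open>\<alpha> > (k - 1) l\<close> suffices.\<close>

definition rows_linked :: "('a \<Rightarrow> 'a \<Rightarrow> bool) \<Rightarrow> nat \<Rightarrow> nat \<Rightarrow> (nat \<Rightarrow> 'a) \<Rightarrow> (nat \<Rightarrow> 'a) \<Rightarrow> bool" where
  "rows_linked E l i a b \<longleftrightarrow> (\<forall>j \<in> {1..l}. E (a j) (b j) \<and>
     (odd i \<longrightarrow> E (a (cyc_succ l j)) (b j)) \<and> (even i \<longrightarrow> E (a j) (b (cyc_succ l j))))"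

definition cylinder_embedding :: "'a set \<Rightarrow> ('a \<Rightarrow> 'a \<Rightarrow> bool) \<Rightarrow> nat \<Rightarrow> nat \<Rightarrow> (nat \<Rightarrow> nat \<Rightarrow> 'a) \<Rightarrow> bool" where
  "cylinder_embedding V E k l f \<longleftrightarrow> inj_on (\<lambda>(i, j). f i j) ({1..k} \<times> {1..l}) \<and>
     (\<forall>i \<in> {1..k}. f i ` {1..l} \<subseteq> V) \<and> (\<forall>i \<in> {1..k-1}. rows_linked E l i (f i) (f (Suc i)))"

lemma has_cylinder_iff: "has_cylinder V E k l \<longleftrightarrow> (\<exists>f. cylinder_embedding V E k l f)"
  unfolding has_cylinder_def cylinder_embedding_def rows_linked_def by (auto simp: image_subset_iff)

lemma cyc_succ_in: "j \<in> {1..l} \<Longrightarrow> cyc_succ l j \<in> {1..l}"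
  unfolding cyc_succ_def by auto

lemma rows_linked_cong:
  "\<forall>j \<in> {1..l}. a j = a' j \<Longrightarrow> rows_linked E l i a b \<longleftrightarrow> rows_linked E l i a' b"
  unfolding rows_linked_def using cyc_succ_in by metis

text \<open>Row \<open>i\<close> of the cylinder is read off a cycle \<open>x\<^sub>1 \<dots> x\<^sub>2\<^sub>l\<close> as \<open>x\<^sub>1, x\<^sub>3, \<dots>\<close> for odd \<open>i\<close>
  and as \<open>x\<^sub>2, x\<^sub>4, \<dots>\<close> for even \<open>i\<close> (list positions are 0-based).\<close>
definition row_pos :: "nat \<Rightarrow> nat \<Rightarrow> nat" where
  "row_pos i j = (if odd i then 2 * j - 2 else 2 * j - 1)"

definition cycle_row :: "'a list \<Rightarrow> nat \<Rightarrow> nat \<Rightarrow> 'a" where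
  "cycle_row xs i j = xs ! row_pos i j"

lemma row_pos_less: "j \<in> {1..l} \<Longrightarrow> row_pos i j < 2 * l"
  unfolding row_pos_def by auto

lemma row_pos_eq_iff:
  "j \<in> {1..l} \<Longrightarrow> j' \<in> {1..l} \<Longrightarrow> row_pos i j = row_pos i' j' \<longleftrightarrow> (odd i \<longleftrightarrow> odd i') \<and> j = j'"
  unfolding row_pos_def by (auto split: if_splits) presburger+

lemma cycle_row_in_set: "is_cycle V E l xs \<Longrightarrow> j \<in> {1..l} \<Longrightarrow> cycle_row xs i j \<in> set xs"
  unfolding is_cycle_def cycle_row_def using row_pos_less by auto

lemma inj_on_cycle_row: "is_cycle V E l xs \<Longrightarrow> inj_on (cycle_row xs i) {1..l}"
  unfolding is_cycle_def cycle_row_def inj_on_def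
  by (metis nth_eq_iff_index_eq row_pos_less row_pos_eq_iff)

lemma cycle_edge_odd_even:
  assumes "is_cycle V E l xs" "j \<in> {1..l}"
  shows "E (xs ! (2 * j - 2)) (xs ! (2 * j - 1))"
proof -
  have "2 * j - 2 < 2 * l" "(2 * j - 2 + 1) mod (2 * l) = 2 * j - 1" using assms(2) by auto
  then show ?thesis using assms(1) unfolding is_cycle_def by metis
qed

lemma cycle_edge_even_odd:
  assumes "is_cycle V E l xs" "j \<in> {1..l}"
  shows "E (xs ! (2 * j - 1)) (xs ! (2 * cyc_succ l j - 2))"
proof -
  have "2 * j - 1 < 2 * l" "(2 * j - 1 + 1) mod (2 * l) = 2 * cyc_succ l j - 2"
    using assms(2) unfolding cyc_succ_def by auto
  then show ?thesis using assms(1) unfolding is_cycle_def by metis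
qed

lemma cycle_rows_linked:
  assumes "simple_graph V E" "is_cycle V E l xs"
  shows "rows_linked E l i (cycle_row xs i) (cycle_row xs (Suc i))"
  unfolding rows_linked_def
proof
  fix j assume j: "j \<in> {1..l}"
  have sym: "\<And>x y. E x y \<Longrightarrow> E y x" using assms(1) unfolding simple_graph_def by blast
  note edges = cycle_edge_odd_even[OF assms(2) j] cycle_edge_even_odd[OF assms(2) j]
  show "E (cycle_row xs i j) (cycle_row xs (Suc i) j) \<and>
      (odd i \<longrightarrow> E (cycle_row xs i (cyc_succ l j)) (cycle_row xs (Suc i) j)) \<and>
      (even i \<longrightarrow> E (cycle_row xs i j) (cycle_row xs (Suc i) (cyc_succ l j)))"
    using edges sym[OF edges(1)] sym[OF edges(2)] by (simp add: cycle_row_def row_pos_def)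
qed

lemma rich_avoid:
  assumes rich: "rich V E l \<alpha> C" and F: "finite F" "real (card F) < \<alpha>"
    and P: "finite P" "P \<subseteq> {..<2 * l}" and xs: "xs \<in> C"
  shows "\<exists>ys \<in> C. (\<forall>p. p \<notin> P \<longrightarrow> ys ! p = xs ! p) \<and> (\<forall>p \<in> P. ys ! p \<notin> F)"
  using P
proof (induction P)
  case empty
  then show ?case using xs by auto
next
  case (insert a P)
  then obtain ys where ys: "ys \<in> C" "\<forall>p. p \<notin> P \<longrightarrow> ys ! p = xs ! p" "\<forall>p \<in> P. ys ! p \<notin> F"
    by auto
  have a: "a < 2 * l" using insert.prems by auto
  obtain S where S: "finite S" "real (card S) \<ge> \<alpha>" "\<forall>v \<in> S. ys[a := v] \<in> C"
    using rich ys(1) a unfolding rich_def by blast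
  have "\<not> S \<subseteq> F"
  proof
    assume "S \<subseteq> F"
    then have "card S \<le> card F" using card_mono F(1) by blast
    then show False using S(2) F(2) by linarith
  qed
  then obtain v where v: "v \<in> S" "v \<notin> F" by blast
  have "length ys = 2 * l" using rich ys(1) unfolding rich_def is_cycle_def by blast
  then have "\<forall>p \<in> insert a P. ys[a := v] ! p \<notin> F"
    using ys(3) v(2) a by (simp add: nth_list_update)
  moreover have "\<forall>p. p \<notin> insert a P \<longrightarrow> ys[a := v] ! p = xs ! p" using ys(2) by simp
  moreover have "ys[a := v] \<in> C" using S(3) v(1) by blast
  ultimately show ?case by blast
qed

lemma cylinder_embedding_single_row:
  "inj_on a {1..l} \<Longrightarrow> a ` {1..l} \<subseteq> V \<Longrightarrow> cylinder_embedding V E 1 l (\<lambda>_. a)"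
proof -
  assume "inj_on a {1..l}" "a ` {1..l} \<subseteq> V"
  moreover have "inj_on (\<lambda>(i, j). a j) ({1::nat} \<times> {1..l}) \<longleftrightarrow> inj_on a {1..l}"
    by (auto simp: inj_on_def)
  ultimately show ?thesis unfolding cylinder_embedding_def by simp
qed

lemma cylinder_embedding_extend:
  assumes f: "cylinder_embedding V E r l f"
    and b: "b ` {1..l} \<subseteq> V" "inj_on b {1..l}"
    and fresh: "b ` {1..l} \<inter> (\<lambda>(i, j). f i j) ` ({1..r} \<times> {1..l}) = {}"
    and linked: "rows_linked E l r (f r) b"
  shows "cylinder_embedding V E (Suc r) l (f(Suc r := b))"
proof -
  have inj: "inj_on (\<lambda>(i, j). f i j) ({1..r} \<times> {1..l})"
    using f unfolding cylinder_embedding_def by blast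
  have b_fresh: "b j \<noteq> f i j'" if "j \<in> {1..l}" "i \<in> {1..r}" "j' \<in> {1..l}" for i j j'
  proof
    assume "b j = f i j'"
    then have "b j \<in> (\<lambda>(i, j). f i j) ` ({1..r} \<times> {1..l})" using that by force
    then show False using fresh that(1) by blast
  qed
  have "inj_on (\<lambda>(i, j). (f(Suc r := b)) i j) ({1..Suc r} \<times> {1..l})"
  proof (rule inj_onI, clarify)
    fix i j i' j'
    assume "i \<in> {1..Suc r}" "j \<in> {1..l}" "i' \<in> {1..Suc r}" "j' \<in> {1..l}"
      "(f(Suc r := b)) i j = (f(Suc r := b)) i' j'"
    then show "i = i' \<and> j = j'"
      using inj_onD[OF inj, of "(i, j)" "(i', j')"] inj_onD[OF b(2), of j j'] b_fresh[of j i' j'] b_fresh[of j' i j]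
      by (auto simp: le_Suc_eq split: if_splits)
  qed
  moreover have "\<forall>i \<in> {1..Suc r}. (f(Suc r := b)) i ` {1..l} \<subseteq> V"
    using f b(1) unfolding cylinder_embedding_def by (auto simp: le_Suc_eq image_subset_iff)
  moreover have "\<forall>i \<in> {1..r}. rows_linked E l i ((f(Suc r := b)) i) ((f(Suc r := b)) (Suc i))"
    using f linked unfolding cylinder_embedding_def by (auto simp: le_less_Suc_eq)
  ultimately show ?thesis unfolding cylinder_embedding_def diff_Suc_1 by blast
qed

lemma cylinder_embedding_grow:
  assumes G: "simple_graph V E" and rich: "rich V E l \<alpha> C"
    and ys: "ys \<in> C" and f: "cylinder_embedding V E r l f" and last_row: "f r = cycle_row ys r"
    and small: "real (r * l) < \<alpha>"
  shows "\<exists>zs \<in> C. cylinder_embedding V E (Suc r) l (f(Suc r := cycle_row zs (Suc r)))"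
proof -
  define F where "F = (\<lambda>(i, j). f i j) ` ({1..r} \<times> {1..l})"
  have "card F \<le> r * l"
    unfolding F_def using card_image_le[of "{1..r} \<times> {1..l}"] by simp
  then have card_F: "real (card F) < \<alpha>" using small by linarith
  define P where "P = row_pos (Suc r) ` {1..l}"
  have "P \<subseteq> {..<2 * l}" unfolding P_def using row_pos_less by blast
  moreover have "finite F" "finite P" unfolding F_def P_def by simp_all
  ultimately obtain zs where zs: "zs \<in> C" and agree: "\<forall>p. p \<notin> P \<longrightarrow> zs ! p = ys ! p"
    and avoid: "\<forall>p \<in> P. zs ! p \<notin> F"
    using rich_avoid[OF rich _ card_F _ _ ys] by blast
  have cyc: "is_cycle V E l zs" using rich zs unfolding rich_def by blast
  have "row_pos r j \<notin> P" if "j \<in> {1..l}" for j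
    using row_pos_eq_iff[OF that] unfolding P_def by auto
  then have "\<forall>j \<in> {1..l}. cycle_row zs r j = f r j"
    using agree last_row by (simp add: cycle_row_def)
  then have "rows_linked E l r (f r) (cycle_row zs (Suc r))"
    using rows_linked_cong cycle_rows_linked[OF G cyc] by blast
  moreover have "cycle_row zs (Suc r) ` {1..l} \<inter> F = {}"
    using avoid unfolding P_def cycle_row_def by blast
  moreover have "cycle_row zs (Suc r) ` {1..l} \<subseteq> V"
    using cyc cycle_row_in_set unfolding is_cycle_def by blast
  ultimately show ?thesis
    using cylinder_embedding_extend[OF f _ inj_on_cycle_row[OF cyc]] zs unfolding F_def by blast
qed

lemma rich_cylinder_embedding:
  assumes G: "simple_graph V E" and rich: "rich V E l \<alpha> C" and "C \<noteq> {}"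
    and "1 \<le> r" and "real ((r - 1) * l) < \<alpha>"
  shows "\<exists>f ys. ys \<in> C \<and> cylinder_embedding V E r l f \<and> f r = cycle_row ys r"
  using assms(4,5)
proof (induction r rule: nat_induct_at_least)
  case base
  obtain xs where xs: "xs \<in> C" using \<open>C \<noteq> {}\<close> by blast
  then have cyc: "is_cycle V E l xs" using rich unfolding rich_def by blast
  then have "cycle_row xs 1 ` {1..l} \<subseteq> V"
    using cycle_row_in_set unfolding is_cycle_def by blast
  then have "cylinder_embedding V E 1 l (\<lambda>_. cycle_row xs 1)"
    by (rule cylinder_embedding_single_row[OF inj_on_cycle_row[OF cyc]])
  then show ?case using xs by blast
next
  case (Suc r)
  then have small: "real (r * l) < \<alpha>" by simp
  moreover have "(r - 1) * l \<le> r * l" by simp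
  ultimately obtain f ys where "ys \<in> C" "cylinder_embedding V E r l f" "f r = cycle_row ys r"
    using Suc.IH by (meson of_nat_le_iff le_less_trans)
  then obtain zs where "zs \<in> C"
    "cylinder_embedding V E (Suc r) l (f(Suc r := cycle_row zs (Suc r)))"
    using cylinder_embedding_grow[OF G rich _ _ _ small] by blast
  then show ?case by (metis fun_upd_same)
qed

theorem proposition3p4:
  fixes V :: "'a set" and E :: "'a \<Rightarrow> 'a \<Rightarrow> bool" and k l :: nat and \<alpha> :: real
    and C :: "'a list set"
  assumes "simple_graph V E"
    and "k \<ge> 2" and "l \<ge> 2" and "\<alpha> > 0"
    and "C \<noteq> {}" and "rich V E l \<alpha> C"
    and "\<alpha> \<ge> real (k * l)"
  shows "has_cylinder V E k l"
proof -
  have "(k - 1) * l < k * l" using assms(2,3) by simp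
  then have "real ((k - 1) * l) < \<alpha>" using assms(7) by (metis of_nat_less_iff less_le_trans)
  then show ?thesis
    unfolding has_cylinder_iff using rich_cylinder_embedding[OF assms(1,6,5), of k] assms(2) by auto
qed

end
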